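(* Let $S=\{a_i \bmod d_i : 1\le i\le r\}$ be an exact covering system with $r\ge 2$, and let $G_S$ be its exact covering system digraph. Then every (weakly connected) component of $G_S$ contains exactly one directed cycle.
   Context: A system of congruences $S=\{a_i \bmod d_i : 1\le i\le r\}$ with integers $a_i$ and nonzero integers $d_i$ (negative $d_i$ allowed; $n\equiv a \bmod -d$ means $n\equiv a\bmod d$) is an exact covering system if every integer satisfies exactly one of the congruences; congruences are distinguished by their chosen representatives $a_i$. The exact covering system digraph $G_S$ has vertex set $\mathbb{Z}$ and edges $(n,d_in+a_i)$ for all $n\in\mathbb{Z}$, $1\le i\le r$ (loops count as cycles of length one); $r$ is its degree. A component means a connected component of the underlying undirected graph. *)

theory Defs
  imports Main "HOL-Number_Theory.Cong"
begin

text \<open>A system of congruences is a list of pairs (a_i, d_i); index i < length S.\<close>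

definition exact_covering_system :: "(int \<times> int) list \<Rightarrow> bool" where
  "exact_covering_system S \<longleftrightarrow>
     (\<forall>i<length S. snd (S ! i) \<noteq> 0) \<and>
     (\<forall>n::int. \<exists>!i. i < length S \<and> [n = fst (S ! i)] (mod snd (S ! i)))"

text \<open>Edges of the digraph G_S are labelled by (source n, index i); the edge goes to d_i n + a_i.\<close>

definition ecs_target :: "(int \<times> int) list \<Rightarrow> int \<Rightarrow> nat \<Rightarrow> int" where
  "ecs_target S n i = snd (S ! i) * n + fst (S ! i)"

definition ecs_edges :: "(int \<times> int) list \<Rightarrow> (int \<times> nat) set" where
  "ecs_edges S = {(n, i). i < length S}"

text \<open>A directed cycle (loops included) is given by its set of edges: a nonempty closed walk
  whose source vertices are pairwise distinct.\<close>

definition ecs_cycle :: "(int \<times> int) list \<Rightarrow> (int \<times> nat) set \<Rightarrow> bool" where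
  "ecs_cycle S C \<longleftrightarrow>
     (\<exists>es. es \<noteq> [] \<and> set es = C \<and> set es \<subseteq> ecs_edges S \<and> distinct (map fst es) \<and>
        (\<forall>j<length es. ecs_target S (fst (es ! j)) (snd (es ! j))
                          = fst (es ! ((j + 1) mod length es))))"

definition ecs_adj :: "(int \<times> int) list \<Rightarrow> int \<Rightarrow> int \<Rightarrow> bool" where
  "ecs_adj S x y \<longleftrightarrow> (\<exists>i<length S. y = ecs_target S x i \<or> x = ecs_target S y i)"

definition ecs_component :: "(int \<times> int) list \<Rightarrow> int set \<Rightarrow> bool" where
  "ecs_component S K \<longleftrightarrow> (\<exists>x. K = {y. (ecs_adj S)\<^sup>*\<^sup>* x y})"

end

theory Submission
  imports Defs "HOL-Combinatorics.Orbits"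
begin

(*
  Every integer m lies in exactly one class a_i mod d_i, so m has exactly one incoming edge,
  namely from parent m = (m - a_i) div d_i.  Hence G_S is the functional graph of parent with
  all edges reversed, and its directed cycles are exactly the cycles (finite orbits) of parent.
  When r >= 2 no modulus is a unit, so |d_i| >= 2 and |parent m| <= (|m| + max |a_i|) / 2:
  the iterates of parent starting anywhere stay bounded, hence run into a cycle, which lies in
  the same component.  Two vertices of one component have a common iterate, so two cycles in
  the same component share a vertex and therefore coincide.
*)

section \<open>Cycles of a function and components of its graph\<close>

definition cycle_list :: "('a \<Rightarrow> 'a) \<Rightarrow> 'a list \<Rightarrow> bool" where
  "cycle_list f xs \<longleftrightarrow> xs \<noteq> [] \<and> distinct xs \<and> map f xs = rotate1 xs"

lemma cycle_list_nth:
  assumes "cycle_list f xs" "j < length xs"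
  shows "f (xs ! j) = xs ! (Suc j mod length xs)"
proof -
  have "map f xs ! j = rotate1 xs ! j"
    using assms(1) by (simp add: cycle_list_def)
  then show ?thesis
    using assms(2) by (simp add: nth_rotate1)
qed

lemma funpow_cycle_list:
  assumes "cycle_list f xs"
  shows "(f ^^ n) (xs ! 0) = xs ! (n mod length xs)"
proof (induction n)
  case (Suc n)
  have "n mod length xs < length xs"
    using assms by (simp add: cycle_list_def)
  then show ?case
    using Suc cycle_list_nth[OF assms] by (simp add: mod_Suc_eq)
qed simp

lemma cyclic_on_set_cycle_list:
  assumes "cycle_list f xs"
  shows "cyclic_on f (set xs)"
proof (rule cyclic_on_singleI)
  have L: "0 < length xs" using assms by (simp add: cycle_list_def)
  then show "xs ! 0 \<in> set xs" by simp
  have "orbit f (xs ! 0) = {xs ! (n mod length xs) | n. 0 < n}"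
    by (simp add: orbit_altdef funpow_cycle_list[OF assms])
  also have "\<dots> = set xs"
  proof (intro set_eqI iffI)
    fix y assume "y \<in> set xs"
    then obtain j where "j < length xs" "y = xs ! j" by (auto simp: in_set_conv_nth)
    then show "y \<in> {xs ! (n mod length xs) | n. 0 < n}"
      by (intro CollectI exI[of _ "j + length xs"]) auto
  qed (use L in auto)
  finally show "set xs = orbit f (xs ! 0)" ..
qed

lemma cyclic_on_imp_cycle_list:
  assumes "cyclic_on f V"
  obtains xs where "cycle_list f xs" "set xs = V"
proof -
  obtain u where u: "u \<in> V" "V = orbit f u"
    using assms by (auto simp: cyclic_on_def)
  then have "u \<in> orbit f u" by simp
  define n where "n = funpow_dist1 f u u"
  have n: "(f ^^ n) u = u" "0 < n"
    using funpow_dist1_prop[OF \<open>u \<in> orbit f u\<close>] by (simp_all add: n_def)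
  have distinct_iterates: "(f ^^ a) u \<noteq> (f ^^ b) u" if "a < n" "b < n" "a \<noteq> b" for a b
    using funpow_neq_less_funpow_dist1[OF \<open>u \<in> orbit f u\<close>] that by (simp add: n_def)
  define xs where "xs = map (\<lambda>j. (f ^^ j) u) [0..<n]"
  have "map f xs = rotate1 xs"
  proof (rule nth_equalityI)
    fix j assume "j < length (map f xs)"
    then have j: "j < n" by (simp add: xs_def)
    have "(f ^^ Suc j) u = (f ^^ (Suc j mod n)) u"
    proof (cases "Suc j < n")
      case False
      then have "Suc j = n" using j by simp
      then show ?thesis using n by simp
    qed simp
    then show "map f xs ! j = rotate1 xs ! j"
      using j n(2) by (simp add: xs_def nth_rotate1)
  qed (simp add: xs_def)
  moreover have "distinct xs"
    unfolding xs_def distinct_map by (auto simp: inj_on_def) (metis distinct_iterates)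
  moreover have "set xs = V"
    using u orbit_altdef_bounded[OF n] by (auto simp: xs_def)
  moreover have "xs \<noteq> []"
    using n(2) by (simp add: xs_def)
  ultimately show ?thesis
    using that by (simp add: cycle_list_def)
qed

lemma rotate1_rev_rotate1: "rotate1 (rev (rotate1 xs)) = rev xs"
  by (cases xs) simp_all

lemma cycle_list_rev_rotate1:
  "cycle_list f (rev (rotate1 xs)) \<longleftrightarrow> xs \<noteq> [] \<and> distinct xs \<and> map f (rotate1 xs) = xs"
proof -
  have "map f (rev (rotate1 xs)) = rotate1 (rev (rotate1 xs)) \<longleftrightarrow> map f (rotate1 xs) = xs"
    by (metis rev_map rev_rev_ident rotate1_rev_rotate1)
  then show ?thesis by (simp add: cycle_list_def)
qed

lemma image_cyclic_on:
  assumes "cyclic_on f V"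
  shows "f ` V = V"
proof
  show "f ` V \<subseteq> V" using cyclic_on_inI[OF assms] by blast
  show "V \<subseteq> f ` V"
  proof
    fix v assume "v \<in> V"
    then have "v \<in> orbit f v" using orbit_cyclic_eq3[OF assms] by simp
    then show "v \<in> f ` V"
      by cases (use \<open>v \<in> V\<close> orbit_cyclic_eq3[OF assms \<open>v \<in> V\<close>] in auto)
  qed
qed

definition fun_adj :: "('a \<Rightarrow> 'a) \<Rightarrow> 'a \<Rightarrow> 'a \<Rightarrow> bool" where
  "fun_adj f x y \<longleftrightarrow> y = f x \<or> x = f y"

lemma rtranclp_fun_adj_funpow: "(fun_adj f)\<^sup>*\<^sup>* x ((f ^^ n) x)"
  by (induction n) (auto simp: fun_adj_def intro: rtranclp.rtrancl_into_rtrancl)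

lemma rtranclp_fun_adj_imp_common_iterate:
  assumes "(fun_adj f)\<^sup>*\<^sup>* x y"
  shows "\<exists>k l. (f ^^ k) x = (f ^^ l) y"
  using assms
proof (induction rule: rtranclp_induct)
  case base
  then show ?case by blast
next
  case (step y z)
  then obtain k l where kl: "(f ^^ k) x = (f ^^ l) y" by blast
  show ?case
  proof (cases "z = f y")
    case True
    then have "(f ^^ Suc k) x = (f ^^ l) z" using kl by (simp add: funpow_swap1)
    then show ?thesis by blast
  next
    case False
    then have "y = f z" using step.hyps(2) by (simp add: fun_adj_def)
    then have "(f ^^ k) x = (f ^^ Suc l) z" using kl by (simp only: funpow_Suc_right o_apply)
    then show ?thesis by blast
  qed
qed

lemma cyclic_on_eq_if_rtranclp_fun_adj:
  assumes "cyclic_on f V" "cyclic_on f W" "a \<in> V" "b \<in> W" "(fun_adj f)\<^sup>*\<^sup>* a b"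
  shows "V = W"
proof -
  obtain k l where w: "(f ^^ k) a = (f ^^ l) b"
    using rtranclp_fun_adj_imp_common_iterate[OF assms(5)] by blast
  have "V = orbit f ((f ^^ k) a)"
    using assms(1,3) by (simp add: cyclic_on_funpow_in orbit_cyclic_eq3)
  also have "\<dots> = W"
    unfolding w using assms(2,4) by (simp add: cyclic_on_funpow_in orbit_cyclic_eq3)
  finally show ?thesis .
qed

lemma funpow_eventually_periodic:
  assumes "finite (range (\<lambda>n. (f ^^ n) x))"
  obtains k where "(f ^^ k) x \<in> orbit f ((f ^^ k) x)"
proof -
  have "\<not> inj (\<lambda>n. (f ^^ n) x)"
    using assms finite_imageD by blast
  then obtain a b where "a \<noteq> b" "(f ^^ a) x = (f ^^ b) x"
    unfolding inj_def by blast
  then obtain a b where ab: "a < b" "(f ^^ a) x = (f ^^ b) x"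
    by (metis linorder_neqE_nat)
  have "(f ^^ (b - a)) ((f ^^ a) x) = (f ^^ (b - a + a)) x"
    by (simp add: funpow_add)
  also have "\<dots> = (f ^^ a) x"
    using ab by simp
  finally have "(f ^^ a) x \<in> orbit f ((f ^^ a) x)"
    using ab(1) unfolding orbit_altdef by (metis (mono_tags) CollectI zero_less_diff)
  then show ?thesis using that by blast
qed

lemma ex1_cyclic_on_in_component:
  assumes "finite (range (\<lambda>n. (f ^^ n) x))"
  shows "\<exists>!V. cyclic_on f V \<and> V \<subseteq> {y. (fun_adj f)\<^sup>*\<^sup>* x y}"
proof (rule ex_ex1I)
  obtain k where k: "(f ^^ k) x \<in> orbit f ((f ^^ k) x)"
    using funpow_eventually_periodic[OF assms] by blast
  have "(fun_adj f)\<^sup>*\<^sup>* x ((f ^^ n) ((f ^^ k) x))" for n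
    using rtranclp_fun_adj_funpow[of f x "n + k"] by (simp add: funpow_add)
  then have "orbit f ((f ^^ k) x) \<subseteq> {y. (fun_adj f)\<^sup>*\<^sup>* x y}"
    by (auto simp: orbit_altdef)
  then show "\<exists>V. cyclic_on f V \<and> V \<subseteq> {y. (fun_adj f)\<^sup>*\<^sup>* x y}"
    using cyclic_on_singleI[OF k refl] by blast
next
  fix V W
  assume V: "cyclic_on f V \<and> V \<subseteq> {y. (fun_adj f)\<^sup>*\<^sup>* x y}"
    and W: "cyclic_on f W \<and> W \<subseteq> {y. (fun_adj f)\<^sup>*\<^sup>* x y}"
  obtain a b where ab: "a \<in> V" "b \<in> W"
    using V W by (auto simp: cyclic_on_alldef)
  have "symp (fun_adj f)" by (auto simp: symp_def fun_adj_def)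
  moreover have "(fun_adj f)\<^sup>*\<^sup>* x a" using V ab(1) by blast
  ultimately have "(fun_adj f)\<^sup>*\<^sup>* a x" by (rule sympD[OF symp_rtranclp])
  moreover have "(fun_adj f)\<^sup>*\<^sup>* x b" using W ab(2) by blast
  ultimately have "(fun_adj f)\<^sup>*\<^sup>* a b" by (rule rtranclp_trans)
  with V W ab show "V = W"
    by (intro cyclic_on_eq_if_rtranclp_fun_adj[of f V W a b]) simp_all
qed

section \<open>The digraph of an exact covering system\<close>

locale exact_covering =
  fixes S :: "(int \<times> int) list"
  assumes exact: "exact_covering_system S"
begin

lemma modulus_nonzero: "i < length S \<Longrightarrow> snd (S ! i) \<noteq> 0"
  using exact by (simp add: exact_covering_system_def)

lemma ex1_class: "\<exists>!i. i < length S \<and> [n = fst (S ! i)] (mod snd (S ! i))"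
  using exact by (simp add: exact_covering_system_def)

definition class_index :: "int \<Rightarrow> nat" where
  "class_index n = (THE i. i < length S \<and> [n = fst (S ! i)] (mod snd (S ! i)))"

lemma class_index:
  "class_index n < length S" "[n = fst (S ! class_index n)] (mod snd (S ! class_index n))"
  using theI'[OF ex1_class[of n]] by (simp_all add: class_index_def)

lemma class_index_eqI:
  "i < length S \<Longrightarrow> [n = fst (S ! i)] (mod snd (S ! i)) \<Longrightarrow> class_index n = i"
  unfolding class_index_def by (rule the1_equality[OF ex1_class]) simp

definition parent :: "int \<Rightarrow> int" where
  "parent m = (m - fst (S ! class_index m)) div snd (S ! class_index m)"

definition in_edge :: "int \<Rightarrow> int \<times> nat" where
  "in_edge m = (parent m, class_index m)"

lemma ecs_target_eq_iff:
  assumes "i < length S"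
  shows "ecs_target S n i = m \<longleftrightarrow> (n, i) = in_edge m"
proof
  assume m: "ecs_target S n i = m"
  then have "[m = fst (S ! i)] (mod snd (S ! i))"
    by (auto simp: ecs_target_def cong_iff_dvd_diff)
  then have i: "class_index m = i"
    using class_index_eqI[OF assms] by blast
  have "parent m = n"
    using modulus_nonzero[OF assms]
    unfolding parent_def i unfolding m[symmetric] ecs_target_def by simp
  then show "(n, i) = in_edge m" by (simp add: in_edge_def i)
next
  assume "(n, i) = in_edge m"
  then have n: "n = parent m" and i: "i = class_index m" by (simp_all add: in_edge_def)
  have "snd (S ! i) dvd m - fst (S ! i)"
    using class_index(2)[of m] by (simp add: i cong_iff_dvd_diff)
  then show "ecs_target S n i = m"
    by (simp add: ecs_target_def n parent_def i[symmetric])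
qed

lemma ecs_target_in_edge: "ecs_target S (fst (in_edge m)) (snd (in_edge m)) = m"
  using ecs_target_eq_iff[OF class_index(1)] by (simp add: in_edge_def)

lemma ecs_adj_eq_fun_adj: "ecs_adj S = fun_adj parent"
proof (intro ext)
  fix x y
  have "(\<exists>i<length S. y = ecs_target S x i) \<longleftrightarrow> x = parent y" for x y
  proof
    assume "\<exists>i<length S. y = ecs_target S x i"
    then obtain i where "i < length S" "ecs_target S x i = y" by auto
    then show "x = parent y" using ecs_target_eq_iff by (simp add: in_edge_def)
  next
    assume "x = parent y"
    then show "\<exists>i<length S. y = ecs_target S x i"
      using ecs_target_in_edge[of y] class_index(1)[of y] by (auto simp: in_edge_def)
  qed
  then show "ecs_adj S x y = fun_adj parent x y"
    by (auto simp: ecs_adj_def fun_adj_def)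
qed

lemma abs_modulus_ge_2:
  assumes "2 \<le> length S" "i < length S"
  shows "2 \<le> \<bar>snd (S ! i)\<bar>"
proof (rule ccontr)
  assume "\<not> 2 \<le> \<bar>snd (S ! i)\<bar>"
  then have "\<bar>snd (S ! i)\<bar> = 1" using modulus_nonzero[OF assms(2)] by linarith
  then have "snd (S ! i) dvd k" for k
    by (metis abs_dvd_iff one_dvd)
  then have "[n = fst (S ! i)] (mod snd (S ! i))" for n
    by (simp add: cong_iff_dvd_diff)
  moreover define j where "j = (if i = 0 then 1 else (0::nat))"
  then have j: "j < length S" "j \<noteq> i" using assms by auto
  ultimately have "class_index (fst (S ! j)) = i"
    using class_index_eqI[OF assms(2)] by blast
  moreover have "class_index (fst (S ! j)) = j"
    using class_index_eqI[OF j(1)] by simp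
  ultimately show False using j(2) by simp
qed

lemma abs_parent_le:
  assumes "2 \<le> length S" "\<forall>i<length S. \<bar>fst (S ! i)\<bar> \<le> A"
  shows "2 * \<bar>parent m\<bar> \<le> \<bar>m\<bar> + A"
proof -
  let ?a = "fst (S ! class_index m)" and ?d = "snd (S ! class_index m)"
  have "m - ?a = ?d * parent m"
    using ecs_target_in_edge[of m] by (simp add: ecs_target_def in_edge_def)
  then have "\<bar>?d\<bar> * \<bar>parent m\<bar> = \<bar>m - ?a\<bar>"
    by (simp add: abs_mult)
  also have "\<dots> \<le> \<bar>m\<bar> + A"
    using assms(2) class_index(1)[of m] by (meson abs_triangle_ineq4 add_left_mono order_trans)
  moreover have "2 * \<bar>parent m\<bar> \<le> \<bar>?d\<bar> * \<bar>parent m\<bar>"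
    using abs_modulus_ge_2[OF assms(1) class_index(1)] by (rule mult_right_mono) simp
  ultimately show ?thesis by linarith
qed

lemma finite_parent_iterates:
  assumes "2 \<le> length S"
  shows "finite (range (\<lambda>n. (parent ^^ n) x))"
proof -
  define A where "A = Max ((\<lambda>i. \<bar>fst (S ! i)\<bar>) ` {..<length S})"
  have A: "\<forall>i<length S. \<bar>fst (S ! i)\<bar> \<le> A"
    by (simp add: A_def)
  define B where "B = max \<bar>x\<bar> A"
  have bound: "\<bar>(parent ^^ n) x\<bar> \<le> B" for n
  proof (induction n)
    case (Suc n)
    then show ?case
      using abs_parent_le[OF assms A, of "(parent ^^ n) x"] by (simp add: B_def)
  qed (simp add: B_def)
  have "(parent ^^ n) x \<in> {-B..B}" for n
    using bound[of n] by (simp add: abs_le_iff)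
  then have "range (\<lambda>n. (parent ^^ n) x) \<subseteq> {-B..B}"
    by blast
  then show ?thesis by (rule finite_subset) simp
qed

lemma ecs_cycle_vertex_listE:
  assumes "ecs_cycle S C"
  obtains vs where "vs \<noteq> []" "distinct vs" "map parent (rotate1 vs) = vs" "C = in_edge ` set vs"
proof -
  obtain es where es: "es \<noteq> []" "set es = C" "set es \<subseteq> ecs_edges S" "distinct (map fst es)"
    "\<forall>j<length es. ecs_target S (fst (es ! j)) (snd (es ! j)) = fst (es ! (Suc j mod length es))"
    using assms by (auto simp: ecs_cycle_def)
  define vs where "vs = map fst es"
  have es_nth: "es ! j = in_edge (vs ! (Suc j mod length vs))" if "j < length vs" for j
  proof -
    have "snd (es ! j) < length S"
      using es(3) that nth_mem by (fastforce simp: vs_def ecs_edges_def)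
    moreover have "ecs_target S (fst (es ! j)) (snd (es ! j)) = vs ! (Suc j mod length vs)"
      using es(1,5) that by (simp add: vs_def)
    ultimately show ?thesis
      using ecs_target_eq_iff by (metis prod.collapse)
  qed
  have length_vs: "length vs = length es"
    by (simp add: vs_def)
  have es_eq: "es = map in_edge (rotate1 vs)"
    using es(1) by (intro nth_equalityI) (simp_all add: nth_rotate1 es_nth length_vs)
  have "map parent (rotate1 vs) = map fst es"
    unfolding es_eq by (simp add: in_edge_def comp_def)
  also have "\<dots> = vs"
    by (simp add: vs_def)
  moreover have "C = in_edge ` set vs"
    unfolding es(2)[symmetric] es_eq by simp
  moreover have "vs \<noteq> []" "distinct vs"
    using es(1,4) by (simp_all add: vs_def)
  ultimately show ?thesis using that by blast
qed

lemma ecs_cycle_of_vertex_list: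
  assumes "vs \<noteq> []" "distinct vs" "map parent (rotate1 vs) = vs"
  shows "ecs_cycle S (in_edge ` set vs)"
proof -
  define es where "es = map in_edge (rotate1 vs)"
  have fst_es: "map fst es = vs"
    using assms(3) by (simp add: es_def in_edge_def comp_def)
  have length_es: "length es = length vs"
    by (simp add: es_def)
  show ?thesis
    unfolding ecs_cycle_def
  proof (intro exI conjI allI impI)
    show "es \<noteq> []" "set es = in_edge ` set vs" "distinct (map fst es)"
      using assms fst_es by (simp_all add: es_def)
    show "set es \<subseteq> ecs_edges S"
      using class_index(1) by (auto simp: es_def ecs_edges_def in_edge_def)
    fix j assume j: "j < length es"
    then have "ecs_target S (fst (es ! j)) (snd (es ! j)) = rotate1 vs ! j"
      by (simp add: es_def ecs_target_in_edge)
    also have "\<dots> = map fst es ! (Suc j mod length es)"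
      using j by (simp add: fst_es nth_rotate1 length_es)
    also have "\<dots> = fst (es ! ((j + 1) mod length es))"
      using j assms(1) by (simp add: length_es)
    finally show "ecs_target S (fst (es ! j)) (snd (es ! j)) = fst (es ! ((j + 1) mod length es))" .
  qed
qed

lemma ecs_cycle_iff_cyclic_on:
  "ecs_cycle S C \<longleftrightarrow> (\<exists>V. cyclic_on parent V \<and> C = in_edge ` V)"
proof
  assume "ecs_cycle S C"
  then obtain vs where "vs \<noteq> []" "distinct vs" "map parent (rotate1 vs) = vs"
      and C: "C = in_edge ` set vs"
    by (rule ecs_cycle_vertex_listE)
  then have "cyclic_on parent (set (rev (rotate1 vs)))"
    by (intro cyclic_on_set_cycle_list) (simp add: cycle_list_rev_rotate1)
  then show "\<exists>V. cyclic_on parent V \<and> C = in_edge ` V"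
    using C by auto
next
  assume "\<exists>V. cyclic_on parent V \<and> C = in_edge ` V"
  then obtain V xs where C: "C = in_edge ` V" and xs: "cycle_list parent xs" "set xs = V"
    by (metis cyclic_on_imp_cycle_list)
  define vs where "vs = rev (rotate1 xs)"
  have "cycle_list parent (rev (rotate1 vs))"
    using xs(1) by (simp add: vs_def rotate1_rev_rotate1)
  then have "vs \<noteq> []" "distinct vs" "map parent (rotate1 vs) = vs"
    unfolding cycle_list_rev_rotate1 by blast+
  then have "ecs_cycle S (in_edge ` set vs)"
    by (rule ecs_cycle_of_vertex_list)
  then show "ecs_cycle S C"
    using C xs(2) by (simp add: vs_def)
qed

lemma fst_image_in_edge:
  assumes "cyclic_on parent V"
  shows "fst ` in_edge ` V = V"
  using image_cyclic_on[OF assms] by (simp add: image_image in_edge_def)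

end

theorem mainTheorem5:
  fixes S :: "(int \<times> int) list" and K :: "int set"
  assumes "exact_covering_system S"
    and "length S \<ge> 2"
    and "ecs_component S K"
  shows "\<exists>!C. ecs_cycle S C \<and> fst ` C \<subseteq> K"
proof -
  interpret exact_covering S
    by unfold_locales (rule assms(1))
  obtain x where K: "K = {y. (fun_adj parent)\<^sup>*\<^sup>* x y}"
    using assms(3) by (auto simp: ecs_component_def ecs_adj_eq_fun_adj)
  obtain V where V: "cyclic_on parent V" "V \<subseteq> K"
    and V_unique: "\<And>W. cyclic_on parent W \<Longrightarrow> W \<subseteq> K \<Longrightarrow> W = V"
    using ex1_cyclic_on_in_component[OF finite_parent_iterates[OF assms(2)], of x]
    unfolding K by blast
  show ?thesis
  proof (rule ex1I)
    show "ecs_cycle S (in_edge ` V) \<and> fst ` in_edge ` V \<subseteq> K"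
      using V by (auto simp: ecs_cycle_iff_cyclic_on fst_image_in_edge)
    fix C assume "ecs_cycle S C \<and> fst ` C \<subseteq> K"
    then obtain W where "cyclic_on parent W" "W \<subseteq> K" "C = in_edge ` W"
      by (auto simp: ecs_cycle_iff_cyclic_on fst_image_in_edge)
    then show "C = in_edge ` V" using V_unique by blast
  qed
qed

end
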